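(* Let $G$ be a locally compact group, $H\subset G$ a discrete subset and $U$ a measurable relatively compact neighbourhood of the identity such that $\{xU\}_{x\in H}$ is a partition of $G$ and $hUh^{-1}=U$ for all $h\in H$. Then there is $n\in\mathbb{N}$ such that for every $l\in H$ the approximate block diagonal determined by $l$ meets at most $n$ band diagonals (determined by elements of $H$), and conversely for every $k\in H$ the band diagonal determined by $k$ meets at most $n$ approximate block diagonals (and hence can be covered by these).
   Context: For $k\in H$, the band diagonal determined by $k$ is $\{(x,y)\in G\times G: xy^{-1}\in kU\}$, and the approximate block diagonal determined by $k$ is $\bigcup\{iU\times jU: i,j\in H,\ ij^{-1}\in kU\}$. *)

theory Defs
  imports "HOL-Analysis.Analysis" "HOL-Algebra.Coset"
begin

definition locally_compact_group :: "('a, 'b) monoid_scheme \<Rightarrow> 'a topology \<Rightarrow> bool" where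
  "locally_compact_group G T \<longleftrightarrow>
     group G \<and> topspace T = carrier G \<and>
     continuous_map (prod_topology T T) T (\<lambda>(x, y). x \<otimes>\<^bsub>G\<^esub> y) \<and>
     continuous_map T T (\<lambda>x. inv\<^bsub>G\<^esub> x) \<and>
     Hausdorff_space T \<and> locally_compact_space T"

definition borel_sets_of :: "'a topology \<Rightarrow> 'a set set" where
  "borel_sets_of T = sigma_sets (topspace T) {V. openin T V}"

definition discrete_subset :: "'a topology \<Rightarrow> 'a set \<Rightarrow> bool" where
  "discrete_subset T H \<longleftrightarrow> H \<subseteq> topspace T \<and>
     (\<forall>h\<in>H. \<exists>V. openin T V \<and> V \<inter> H = {h})"

definition relatively_compact :: "'a topology \<Rightarrow> 'a set \<Rightarrow> bool" where
  "relatively_compact T U \<longleftrightarrow> U \<subseteq> topspace T \<and> compactin T (T closure_of U)"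

definition neighbourhood_of :: "'a topology \<Rightarrow> 'a set \<Rightarrow> 'a \<Rightarrow> bool" where
  "neighbourhood_of T U x \<longleftrightarrow> U \<subseteq> topspace T \<and> (\<exists>V. openin T V \<and> x \<in> V \<and> V \<subseteq> U)"

definition band_diagonal :: "('a, 'b) monoid_scheme \<Rightarrow> 'a set \<Rightarrow> 'a \<Rightarrow> ('a \<times> 'a) set" where
  "band_diagonal G U k =
     {(x, y). x \<in> carrier G \<and> y \<in> carrier G \<and> x \<otimes>\<^bsub>G\<^esub> inv\<^bsub>G\<^esub> y \<in> k <#\<^bsub>G\<^esub> U}"

definition approx_block_diagonal ::
  "('a, 'b) monoid_scheme \<Rightarrow> 'a set \<Rightarrow> 'a set \<Rightarrow> 'a \<Rightarrow> ('a \<times> 'a) set" where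
  "approx_block_diagonal G H U k =
     \<Union>{(i <#\<^bsub>G\<^esub> U) \<times> (j <#\<^bsub>G\<^esub> U) | i j. i \<in> H \<and> j \<in> H \<and>
          i \<otimes>\<^bsub>G\<^esub> inv\<^bsub>G\<^esub> j \<in> k <#\<^bsub>G\<^esub> U}"

end

theory Submission
  imports Defs
begin

text \<open>Since every element of \<open>H\<close> normalises \<open>U\<close>, the band diagonal of \<open>k\<close> can meet
  the approximate block diagonal of \<open>l\<close> only if \<open>l\<inverse>k \<in> UU\<inverse>UU\<inverse>\<close>, a relatively
  compact set; so both counts are bounded by the number of points of \<open>H\<close> in a
  translate \<open>gS\<close> of a fixed compact set \<open>S\<close>. Pick an open neighbourhood \<open>V \<subseteq> U\<close> of
  the identity and cover \<open>S\<close> by finitely many open sets \<open>W\<close> with \<open>W\<inverse>W \<subseteq> V\<close>. Two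
  points \<open>h \<noteq> h'\<close> of \<open>H\<close> with \<open>g\<inverse>h, g\<inverse>h'\<close> in the same \<open>W\<close> would give
  \<open>h' \<in> hV \<inter> h'V\<close>, contradicting disjointness of the translates; hence \<open>gS\<close> contains
  at most as many points of \<open>H\<close> as the cover has members, independently of \<open>g\<close>.\<close>

lemma compactin_set_mult:
  assumes "locally_compact_group G T" "compactin T A" "compactin T B"
  shows "compactin T (A <#>\<^bsub>G\<^esub> B)"
proof -
  have "A <#>\<^bsub>G\<^esub> B = (\<lambda>(x, y). x \<otimes>\<^bsub>G\<^esub> y) ` (A \<times> B)"
    unfolding set_mult_def by auto
  moreover have "compactin (prod_topology T T) (A \<times> B)"
    using assms(2,3) by (simp add: compactin_Times)
  ultimately show ?thesis
    using assms(1) image_compactin unfolding locally_compact_group_def by metis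
qed

lemma compactin_set_inv:
  assumes "locally_compact_group G T" "compactin T A"
  shows "compactin T (set_inv\<^bsub>G\<^esub> A)"
proof -
  have "set_inv\<^bsub>G\<^esub> A = (\<lambda>x. inv\<^bsub>G\<^esub> x) ` A"
    unfolding SET_INV_def by auto
  then show ?thesis
    using assms image_compactin unfolding locally_compact_group_def by metis
qed

lemma compactin_cover_by_small_open:
  fixes G (structure)
  assumes lcg: "locally_compact_group G T" and S: "compactin T S"
    and V: "openin T V" "\<one>\<^bsub>G\<^esub> \<in> V"
  obtains \<O> where "finite \<O>" "S \<subseteq> \<Union>\<O>"
    "\<And>W x y. W \<in> \<O> \<Longrightarrow> x \<in> W \<Longrightarrow> y \<in> W \<Longrightarrow> inv\<^bsub>G\<^esub> x \<otimes>\<^bsub>G\<^esub> y \<in> V"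
proof -
  have grp: "group G" and ts: "topspace T = carrier G"
    and mult: "continuous_map (prod_topology T T) T (\<lambda>(x, y). x \<otimes>\<^bsub>G\<^esub> y)"
    and inv: "continuous_map T T (\<lambda>x. inv\<^bsub>G\<^esub> x)"
    using lcg unfolding locally_compact_group_def by auto
  interpret group G by (rule grp)
  have "continuous_map (prod_topology T T) T (\<lambda>p. inv (fst p))"
    using continuous_map_compose[OF continuous_map_fst inv] by (simp add: o_def)
  then have paired: "continuous_map (prod_topology T T) (prod_topology T T) (\<lambda>p. (inv (fst p), snd p))"
    using continuous_map_snd by (rule continuous_map_pairedI)
  have "(\<lambda>(x, y). x \<otimes> y) = (\<lambda>p. fst p \<otimes> snd p)"
    by auto
  with mult have "continuous_map (prod_topology T T) T (\<lambda>p. fst p \<otimes> snd p)"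
    by simp
  from continuous_map_compose[OF paired this]
  have quot: "continuous_map (prod_topology T T) T (\<lambda>p. inv (fst p) \<otimes> snd p)"
    by (simp add: o_def)
  define \<U> where "\<U> = {W. openin T W \<and> (\<forall>x\<in>W. \<forall>y\<in>W. inv x \<otimes> y \<in> V)}"
  have "S \<subseteq> \<Union>\<U>"
  proof
    fix c assume "c \<in> S"
    then have c: "c \<in> carrier G" using compactin_subset_topspace[OF S] ts by blast
    define P where "P = {p \<in> topspace (prod_topology T T). inv (fst p) \<otimes> snd p \<in> V}"
    have "openin (prod_topology T T) P"
      unfolding P_def by (rule openin_continuous_map_preimage[OF quot V(1)])
    moreover have "(c, c) \<in> P" using c V ts by (simp add: P_def)
    ultimately have "\<exists>A B. openin T A \<and> openin T B \<and> c \<in> A \<and> c \<in> B \<and> A \<times> B \<subseteq> P"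
      by (rule openin_prod_topology_alt[THEN iffD1, rule_format])
    then obtain A B where "openin T A" "openin T B" "c \<in> A" "c \<in> B" "A \<times> B \<subseteq> P"
      by blast
    then have "A \<inter> B \<in> \<U>" "c \<in> A \<inter> B"
      unfolding \<U>_def P_def by auto
    then show "c \<in> \<Union>\<U>" by blast
  qed
  then obtain \<F> where "finite \<F>" "\<F> \<subseteq> \<U>" "S \<subseteq> \<Union>\<F>"
    using compactinD[OF S, of \<U>] unfolding \<U>_def by blast
  then show ?thesis
    by (intro that[of \<F>]) (auto simp: \<U>_def)
qed

lemma (in group) inv_mult_cancel_left:
  assumes "x \<in> carrier G" "y \<in> carrier G"
  shows "inv x \<otimes> (x \<otimes> y) = y" and "x \<otimes> (inv x \<otimes> y) = y"
  using assms by (simp_all add: m_assoc[symmetric])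

lemma uniformly_finite_in_translates:
  fixes G (structure)
  assumes lcg: "locally_compact_group G T" and S: "compactin T S"
    and V: "openin T V" "\<one>\<^bsub>G\<^esub> \<in> V" and HC: "H \<subseteq> carrier G"
    and disj: "\<And>h h'. h \<in> H \<Longrightarrow> h' \<in> H \<Longrightarrow> h \<noteq> h' \<Longrightarrow>
                 (h <#\<^bsub>G\<^esub> V) \<inter> (h' <#\<^bsub>G\<^esub> V) = {}"
  obtains N :: nat where "\<And>g. g \<in> carrier G \<Longrightarrow>
    finite {h\<in>H. inv\<^bsub>G\<^esub> g \<otimes>\<^bsub>G\<^esub> h \<in> S} \<and> card {h\<in>H. inv\<^bsub>G\<^esub> g \<otimes>\<^bsub>G\<^esub> h \<in> S} \<le> N"
proof -
  interpret group G using lcg unfolding locally_compact_group_def by blast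
  obtain \<O> where O: "finite \<O>" "S \<subseteq> \<Union>\<O>"
    and small: "\<And>W x y. W \<in> \<O> \<Longrightarrow> x \<in> W \<Longrightarrow> y \<in> W \<Longrightarrow> inv x \<otimes> y \<in> V"
    using compactin_cover_by_small_open[OF lcg S V] by blast
  have "finite {h\<in>H. inv g \<otimes> h \<in> S} \<and> card {h\<in>H. inv g \<otimes> h \<in> S} \<le> card \<O>"
    if g: "g \<in> carrier G" for g
  proof -
    define A where "A = {h\<in>H. inv g \<otimes> h \<in> S}"
    have "\<forall>h\<in>A. \<exists>W. W \<in> \<O> \<and> inv g \<otimes> h \<in> W"
      using O(2) unfolding A_def by blast
    then obtain f where f: "\<And>h. h \<in> A \<Longrightarrow> f h \<in> \<O> \<and> inv g \<otimes> h \<in> f h"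
      by (metis bchoice)
    have "inj_on f A"
    proof (rule inj_onI)
      fix h h' assume h: "h \<in> A" and h': "h' \<in> A" and eq: "f h = f h'"
      have hc: "h \<in> carrier G" "h' \<in> carrier G" using h h' HC unfolding A_def by auto
      have "inv (inv g \<otimes> h) \<otimes> (inv g \<otimes> h') \<in> V"
        using small f[OF h] f[OF h'] eq by metis
      also have "inv (inv g \<otimes> h) \<otimes> (inv g \<otimes> h') = inv h \<otimes> h'"
        using hc g by (simp add: inv_mult_group m_assoc inv_mult_cancel_left)
      finally have "h' = h \<otimes> (inv h \<otimes> h') \<and> inv h \<otimes> h' \<in> V"
        using hc by (simp add: inv_mult_cancel_left)
      then have "h' \<in> (h <# V) \<inter> (h' <# V)"
        using V(2) hc unfolding l_coset_def by (metis UN_iff r_one singletonI IntI)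
      then show "h = h'" using disj h h' unfolding A_def by blast
    qed
    moreover have "f ` A \<subseteq> \<O>" using f by blast
    ultimately have "finite A \<and> card A \<le> card \<O>"
      using inj_on_finite card_inj_on_le O(1) by metis
    then show ?thesis unfolding A_def .
  qed
  then show ?thesis using that by blast
qed

lemma (in group) conj_mem_of_normalises:
  assumes h: "h \<in> carrier G" and U: "U \<subseteq> carrier G"
    and normalises: "(h <# U) #> inv h = U" and u: "u \<in> U"
  shows "h \<otimes> u \<otimes> inv h \<in> U" and "inv h \<otimes> u \<otimes> h \<in> U"
proof -
  show "h \<otimes> u \<otimes> inv h \<in> U"
    using u normalises by (auto simp: l_coset_def r_coset_def)
  from u obtain u' where "u' \<in> U" "u = h \<otimes> u' \<otimes> inv h"
    by (subst (asm) normalises[symmetric]) (auto simp: l_coset_def r_coset_def)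
  moreover have "inv h \<otimes> (h \<otimes> u' \<otimes> inv h) \<otimes> h = u'"
    using h U \<open>u' \<in> U\<close> by (simp add: m_assoc inv_mult_cancel_left subsetD)
  ultimately show "inv h \<otimes> u \<otimes> h \<in> U" by simp
qed

lemma set_mult_memI: "x \<in> A \<Longrightarrow> y \<in> B \<Longrightarrow> x \<otimes>\<^bsub>G\<^esub> y \<in> A <#>\<^bsub>G\<^esub> B"
  unfolding set_mult_def by blast

lemma set_inv_memI: "x \<in> A \<Longrightarrow> inv\<^bsub>G\<^esub> x \<in> set_inv\<^bsub>G\<^esub> A"
  unfolding SET_INV_def by blast

lemma mono_set_inv: "A \<subseteq> B \<Longrightarrow> set_inv\<^bsub>G\<^esub> A \<subseteq> set_inv\<^bsub>G\<^esub> B"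
  unfolding SET_INV_def by blast

lemma relatively_compact_quotients:
  fixes G (structure)
  assumes lcg: "locally_compact_group G T" and U: "relatively_compact T U"
  obtains S where "compactin T S"
    "(U <#> set_inv U) <#> (U <#> set_inv U) \<subseteq> S"
    "set_inv ((U <#> set_inv U) <#> (U <#> set_inv U)) \<subseteq> S"
proof -
  define K where "K = T closure_of U"
  have K: "compactin T K" "U \<subseteq> K"
    using U closure_of_subset unfolding relatively_compact_def K_def by auto
  define Q where "Q A = (A <#> set_inv A) <#> (A <#> set_inv A)" for A
  have "compactin T (Q K \<union> set_inv (Q K))"
    unfolding Q_def using lcg K(1)
    by (intro compactin_Un compactin_set_inv compactin_set_mult)
  moreover have "Q U \<subseteq> Q K"
    unfolding Q_def using K(2) by (intro mono_set_mult mono_set_inv)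
  ultimately show ?thesis
    using that[of "Q K \<union> set_inv (Q K)"] mono_set_inv[of "Q U" "Q K"] unfolding Q_def by blast
qed

lemma (in group) band_meets_block_imp_quotient:
  assumes HC: "H \<subseteq> carrier G" and UC: "U \<subseteq> carrier G"
    and normalises: "\<And>h. h \<in> H \<Longrightarrow> (h <# U) #> inv h = U"
    and l: "l \<in> H" and k: "k \<in> carrier G"
    and meets: "band_diagonal G U k \<inter> approx_block_diagonal G H U l \<noteq> {}"
  shows "inv l \<otimes> k \<in> (U <#> set_inv U) <#> (U <#> set_inv U)"
proof -
  from meets obtain x y i j where
    band: "x \<in> carrier G" "y \<in> carrier G" "x \<otimes> inv y \<in> k <# U" and
    block: "i \<in> H" "j \<in> H" "x \<in> i <# U" "y \<in> j <# U" "i \<otimes> inv j \<in> l <# U"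
    unfolding band_diagonal_def approx_block_diagonal_def by blast
  then obtain u1 u2 u3 u4 where u: "u1 \<in> U" "u2 \<in> U" "u3 \<in> U" "u4 \<in> U"
    and eqs: "x = i \<otimes> u1" "y = j \<otimes> u2" "i \<otimes> inv j = l \<otimes> u3" "x \<otimes> inv y = k \<otimes> u4"
    unfolding l_coset_def by blast
  have cs: "i \<in> carrier G" "j \<in> carrier G" "l \<in> carrier G"
    "u1 \<in> carrier G" "u2 \<in> carrier G" "u3 \<in> carrier G" "u4 \<in> carrier G"
    using block u l HC UC by auto
  have k_eq: "k = i \<otimes> u1 \<otimes> inv (j \<otimes> u2) \<otimes> inv u4"
    using inv_solve_right[of k "x \<otimes> inv y" u4] eqs(4) band cs k by (simp add: eqs(1,2))
  have l_u3: "l \<otimes> (u3 \<otimes> z) = i \<otimes> (inv j \<otimes> z)" if "z \<in> carrier G" for z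
    using eqs(3) cs that by (simp add: m_assoc[symmetric])
  define a where "a = inv l \<otimes> (i \<otimes> u1 \<otimes> inv i) \<otimes> l"
  define b where "b = inv l \<otimes> (i \<otimes> u2 \<otimes> inv i) \<otimes> l"
  have ab: "a \<in> U" "b \<in> U"
    unfolding a_def b_def
    using conj_mem_of_normalises[OF _ UC normalises] cs block(1) l u by blast+
  have "inv l \<otimes> k = (a \<otimes> inv b) \<otimes> (u3 \<otimes> inv u4)"
    unfolding a_def b_def k_eq using cs by (simp add: m_assoc inv_mult_group inv_mult_cancel_left l_u3)
  then show ?thesis
    using ab u by (simp add: set_mult_memI set_inv_memI)
qed

lemma (in group) band_block_incidences_bounded:
  assumes HC: "H \<subseteq> carrier G" and UC: "U \<subseteq> carrier G"
    and normalises: "\<And>h. h \<in> H \<Longrightarrow> (h <# U) #> inv h = U"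
    and S: "(U <#> set_inv U) <#> (U <#> set_inv U) \<subseteq> S"
      "set_inv ((U <#> set_inv U) <#> (U <#> set_inv U)) \<subseteq> S"
    and N: "\<And>g. g \<in> H \<Longrightarrow>
      finite {h\<in>H. inv g \<otimes> h \<in> S} \<and> card {h\<in>H. inv g \<otimes> h \<in> S} \<le> N"
  shows "l \<in> H \<Longrightarrow>
      finite {k\<in>H. band_diagonal G U k \<inter> approx_block_diagonal G H U l \<noteq> {}} \<and>
      card {k\<in>H. band_diagonal G U k \<inter> approx_block_diagonal G H U l \<noteq> {}} \<le> N"
    and "k \<in> H \<Longrightarrow>
      finite {l\<in>H. approx_block_diagonal G H U l \<inter> band_diagonal G U k \<noteq> {}} \<and>
      card {l\<in>H. approx_block_diagonal G H U l \<inter> band_diagonal G U k \<noteq> {}} \<le> N"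
proof -
  have bounded: "finite A \<and> card A \<le> N" if "g \<in> H" "A \<subseteq> {h\<in>H. inv g \<otimes> h \<in> S}" for g A
    using N[OF that(1)] that(2) finite_subset card_mono le_trans by meson
  have quotient: "inv l \<otimes> k \<in> S" and quotient_inv: "inv k \<otimes> l \<in> S"
    if "l \<in> H" "k \<in> H" "band_diagonal G U k \<inter> approx_block_diagonal G H U l \<noteq> {}" for k l
  proof -
    have lk: "l \<in> carrier G" "k \<in> carrier G" using that HC by auto
    have "inv l \<otimes> k \<in> (U <#> set_inv U) <#> (U <#> set_inv U)"
      using band_meets_block_imp_quotient[OF HC UC normalises that(1) lk(2) that(3)] .
    moreover have "inv (inv l \<otimes> k) = inv k \<otimes> l" using lk by (simp add: inv_mult_group)
    ultimately show "inv l \<otimes> k \<in> S" "inv k \<otimes> l \<in> S"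
      using S set_inv_memI[of "inv l \<otimes> k" _ G] by auto
  qed
  show "l \<in> H \<Longrightarrow> finite {k\<in>H. band_diagonal G U k \<inter> approx_block_diagonal G H U l \<noteq> {}} \<and>
      card {k\<in>H. band_diagonal G U k \<inter> approx_block_diagonal G H U l \<noteq> {}} \<le> N"
    using quotient by (intro bounded) blast+
  show "k \<in> H \<Longrightarrow> finite {l\<in>H. approx_block_diagonal G H U l \<inter> band_diagonal G U k \<noteq> {}} \<and>
      card {l\<in>H. approx_block_diagonal G H U l \<inter> band_diagonal G U k \<noteq> {}} \<le> N"
    using quotient_inv by (intro bounded) (blast dest: Int_commute[THEN trans])+
qed

lemma band_diagonal_subset_Union_blocks:
  assumes "group G" and HC: "H \<subseteq> carrier G"
    and cover: "(\<Union>h\<in>H. h <#\<^bsub>G\<^esub> U) = carrier G"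
  shows "band_diagonal G U k \<subseteq>
    \<Union>{approx_block_diagonal G H U l | l. l \<in> H \<and>
         approx_block_diagonal G H U l \<inter> band_diagonal G U k \<noteq> {}}"
proof clarify
  fix x y assume xy: "(x, y) \<in> band_diagonal G U k"
  then have "x \<in> carrier G" "y \<in> carrier G" unfolding band_diagonal_def by auto
  then obtain i j where ij: "i \<in> H" "j \<in> H" "x \<in> i <#\<^bsub>G\<^esub> U" "y \<in> j <#\<^bsub>G\<^esub> U"
    using cover by blast
  then have "i \<otimes>\<^bsub>G\<^esub> inv\<^bsub>G\<^esub> j \<in> carrier G"
    using HC \<open>group G\<close> by (auto intro: group.inv_closed monoid.m_closed group.is_monoid)
  then obtain l where l: "l \<in> H" "i \<otimes>\<^bsub>G\<^esub> inv\<^bsub>G\<^esub> j \<in> l <#\<^bsub>G\<^esub> U"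
    using cover by blast
  then have "(x, y) \<in> approx_block_diagonal G H U l"
    unfolding approx_block_diagonal_def using ij by blast
  then show "(x, y) \<in> \<Union>{approx_block_diagonal G H U l | l. l \<in> H \<and>
         approx_block_diagonal G H U l \<inter> band_diagonal G U k \<noteq> {}}"
    using l xy by blast
qed

theorem mainTheorem11:
  fixes G :: "('a, 'b) monoid_scheme" and T :: "'a topology"
    and H :: "'a set" and U :: "'a set"
  assumes lcg: "locally_compact_group G T"
    and H_discrete: "discrete_subset T H"
    and U_meas: "U \<in> borel_sets_of T"
    and U_relcpt: "relatively_compact T U"
    and U_nbhd: "neighbourhood_of T U \<one>\<^bsub>G\<^esub>"
    and cover: "(\<Union>x\<in>H. x <#\<^bsub>G\<^esub> U) = carrier G"
    and disj: "\<forall>x\<in>H. \<forall>y\<in>H. x \<noteq> y \<longrightarrow> (x <#\<^bsub>G\<^esub> U) \<inter> (y <#\<^bsub>G\<^esub> U) = {}"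
    and conj_inv: "\<forall>h\<in>H. (h <#\<^bsub>G\<^esub> U) #>\<^bsub>G\<^esub> inv\<^bsub>G\<^esub> h = U"
  shows "\<exists>n::nat.
     (\<forall>l\<in>H. finite {k\<in>H. band_diagonal G U k \<inter> approx_block_diagonal G H U l \<noteq> {}} \<and>
             card {k\<in>H. band_diagonal G U k \<inter> approx_block_diagonal G H U l \<noteq> {}} \<le> n) \<and>
     (\<forall>k\<in>H. finite {l\<in>H. approx_block_diagonal G H U l \<inter> band_diagonal G U k \<noteq> {}} \<and>
             card {l\<in>H. approx_block_diagonal G H U l \<inter> band_diagonal G U k \<noteq> {}} \<le> n \<and>
             band_diagonal G U k \<subseteq>
               \<Union>{approx_block_diagonal G H U l | l. l \<in> H \<and>
                    approx_block_diagonal G H U l \<inter> band_diagonal G U k \<noteq> {}})"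
proof -
  have grp: "group G" and ts: "topspace T = carrier G"
    using lcg unfolding locally_compact_group_def by auto
  have HC: "H \<subseteq> carrier G" using H_discrete ts unfolding discrete_subset_def by auto
  have UC: "U \<subseteq> carrier G" using U_relcpt ts unfolding relatively_compact_def by auto
  obtain V where V: "openin T V" "\<one>\<^bsub>G\<^esub> \<in> V" "V \<subseteq> U"
    using U_nbhd unfolding neighbourhood_of_def by auto
  have disjoint: "(h <#\<^bsub>G\<^esub> V) \<inter> (h' <#\<^bsub>G\<^esub> V) = {}" if "h \<in> H" "h' \<in> H" "h \<noteq> h'" for h h'
    using disj that V(3) unfolding l_coset_def by blast
  obtain S where S: "compactin T S"
    "(U <#>\<^bsub>G\<^esub> set_inv\<^bsub>G\<^esub> U) <#>\<^bsub>G\<^esub> (U <#>\<^bsub>G\<^esub> set_inv\<^bsub>G\<^esub> U) \<subseteq> S"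
    "set_inv\<^bsub>G\<^esub> ((U <#>\<^bsub>G\<^esub> set_inv\<^bsub>G\<^esub> U) <#>\<^bsub>G\<^esub> (U <#>\<^bsub>G\<^esub> set_inv\<^bsub>G\<^esub> U)) \<subseteq> S"
    using relatively_compact_quotients[OF lcg U_relcpt] by blast
  obtain N where "\<And>g. g \<in> carrier G \<Longrightarrow> finite {h\<in>H. inv\<^bsub>G\<^esub> g \<otimes>\<^bsub>G\<^esub> h \<in> S} \<and>
      card {h\<in>H. inv\<^bsub>G\<^esub> g \<otimes>\<^bsub>G\<^esub> h \<in> S} \<le> N"
    using uniformly_finite_in_translates[OF lcg S(1) V(1,2) HC disjoint] by blast
  then have N: "\<And>g. g \<in> H \<Longrightarrow> finite {h\<in>H. inv\<^bsub>G\<^esub> g \<otimes>\<^bsub>G\<^esub> h \<in> S} \<and>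
      card {h\<in>H. inv\<^bsub>G\<^esub> g \<otimes>\<^bsub>G\<^esub> h \<in> S} \<le> N"
    using HC by blast
  have normalises: "\<And>h. h \<in> H \<Longrightarrow> (h <#\<^bsub>G\<^esub> U) #>\<^bsub>G\<^esub> inv\<^bsub>G\<^esub> h = U"
    using conj_inv by blast
  show ?thesis
    by (intro exI[of _ N])
      (simp add: group.band_block_incidences_bounded[OF grp HC UC normalises S(2,3) N]
        band_diagonal_subset_Union_blocks[OF grp HC cover])
qed

end
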